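(* Let $Z\subset\mathbb{R}^d$ be a zonotope with $v$ vertices and let $\mathcal{H}_Z$ denote the family of all homothets of $Z$. Then for every finite set $S\subset\mathbb{R}^d$ and every $\epsilon>0$ there is a set $W\subset\mathbb{R}^d$ with $|W|\le v/\epsilon$ such that $W\cap Z'\neq\emptyset$ for every $Z'\in\mathcal{H}_Z$ with $|Z'\cap S|\ge\epsilon|S|$.
   Context: A zonotope is a centrally symmetric convex polytope all of whose faces are centrally symmetric. A homothet of $Z$ is $\lambda Z+x$ with $\lambda>0$, $x\in\mathbb{R}^d$. *)

theory Defs
  imports "HOL-Analysis.Analysis"
begin

definition centrally_symmetric :: "'a::real_vector set \<Rightarrow> bool" where
  "centrally_symmetric A \<longleftrightarrow> (\<exists>c. \<forall>x\<in>A. 2 *\<^sub>R c - x \<in> A)"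

definition zonotope :: "'a::euclidean_space set \<Rightarrow> bool" where
  "zonotope Z \<longleftrightarrow> polytope Z \<and> centrally_symmetric Z \<and>
     (\<forall>F. F face_of Z \<longrightarrow> centrally_symmetric F)"

definition homothets :: "'a::real_vector set \<Rightarrow> 'a set set" where
  "homothets Z = {(\<lambda>z. lam *\<^sub>R z + x) ` Z | lam x. lam > 0}"

end

theory Submission
  imports Defs
begin

text \<open>
  The geometric core is that for a zonotope \<open>Z\<close> with vertex set \<open>V\<close> and any \<open>x, y \<in> Z\<close>
  some \<open>u \<in> V\<close> has \<open>u - (x - y) \<in> Z\<close>. This goes by induction on the dimension: the ray from
  the centre \<open>c\<close> of \<open>Z\<close> in direction \<open>x - y\<close> leaves \<open>Z\<close> through a proper face \<open>F\<close>,
  which is again a zonotope, and the induction hypothesis for the parallel chord of \<open>F\<close> through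
  its centre \<open>c'\<close> yields \<open>u\<close> after a shift by a fraction of \<open>2(c - c')\<close>, which stays in \<open>Z\<close>
  by symmetry and convexity. Consequently, if \<open>\<lambda>\<^sub>1Z + x\<^sub>1\<close> meets \<open>\<lambda>Z + x\<close> with
  \<open>\<lambda>\<^sub>1 \<le> \<lambda>\<close>, then \<open>\<lambda>Z + x\<close> contains one of the \<open>v\<close> points \<open>\<lambda>\<^sub>1V + x\<^sub>1\<close>.

  The net is built greedily: take a homothet containing at least \<open>m = \<epsilon>|S|\<close> points of \<open>S\<close>
  of minimal scale (it exists by compactness), put the images of its vertices into \<open>W\<close>, remove
  its points from \<open>S\<close> and recurse. Each round costs \<open>v\<close> points and removes at least \<open>m\<close>
  points of \<open>S\<close>, and every heavy homothet either meets a chosen one, which is no larger,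
  or stays heavy for the remaining points.
\<close>

definition homothet :: "real \<Rightarrow> 'a::real_vector \<Rightarrow> 'a set \<Rightarrow> 'a set" where
  "homothet lam x A = (\<lambda>z. lam *\<^sub>R z + x) ` A"

lemma mem_homothet_iff: "p \<in> homothet lam x A \<longleftrightarrow> (\<exists>z\<in>A. p = lam *\<^sub>R z + x)"
  by (auto simp: homothet_def)

lemma homothets_iff: "Z' \<in> homothets Z \<longleftrightarrow> (\<exists>lam x. 0 < lam \<and> Z' = homothet lam x Z)"
  by (auto simp: homothet_def homothets_def)

lemma zonotope_face:
  assumes "zonotope Z" "F face_of Z"
  shows "zonotope F"
  using assms face_of_polytope_polytope face_of_refl face_of_trans face_of_imp_convex
  unfolding zonotope_def by meson

lemma finite_extreme_points_polytope:
  fixes P :: "'a::euclidean_space set"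
  shows "polytope P \<Longrightarrow> finite {p. p extreme_point_of P}"
  by (rule finite_polyhedron_extreme_points[OF polytope_imp_polyhedron])

lemma symmetric_center_in_rel_interior:
  fixes P :: "'a::euclidean_space set"
  assumes "convex P" "P \<noteq> {}" "\<And>x. x \<in> P \<Longrightarrow> 2 *\<^sub>R c - x \<in> P"
  shows "c \<in> rel_interior P"
proof -
  obtain x where x: "x \<in> rel_interior P" using assms rel_interior_eq_empty by blast
  show ?thesis
  proof (cases "x = c")
    case True then show ?thesis using x by simp
  next
    case False
    have "2 *\<^sub>R c - x \<in> closure P" using assms(3) x rel_interior_subset closure_subset by blast
    then have "open_segment x (2 *\<^sub>R c - x) \<subseteq> rel_interior P"
      using rel_interior_closure_convex_segment[OF assms(1) x] by blast
    moreover have "midpoint x (2 *\<^sub>R c - x) = c" by (simp add: midpoint_def algebra_simps)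
    moreover have "x \<noteq> 2 *\<^sub>R c - x"
    proof
      assume "x = 2 *\<^sub>R c - x"
      then have "2 *\<^sub>R x = 2 *\<^sub>R c" by (simp add: algebra_simps flip: scaleR_2)
      then show False using False by simp
    qed
    ultimately show ?thesis by (metis midpoint_in_open_segment subsetD)
  qed
qed

lemma polytope_ray_exits_through_proper_face:
  fixes P :: "'a::euclidean_space set"
  assumes "polytope P" "c \<in> rel_interior P" "c + l \<in> P" "l \<noteq> 0"
  obtains d F where "1 \<le> d" "F face_of P" "F \<noteq> P" "c + d *\<^sub>R l \<in> F"
proof -
  have cvx: "convex P" using assms(1) polytope_imp_convex by blast
  obtain d where d: "0 < d" "c + d *\<^sub>R l \<in> rel_frontier P"
    using ray_to_rel_frontier[OF polytope_imp_bounded[OF assms(1)] assms(2) hull_inc[OF assms(3)] assms(4)] .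
  have "1 \<le> d"
  proof (rule ccontr)
    assume "\<not> 1 \<le> d"
    then have "c + d *\<^sub>R l \<in> open_segment c (c + l)"
      unfolding in_segment using assms(4) d(1) by (auto intro!: exI[of _ d] simp: algebra_simps)
    moreover have "open_segment c (c + l) \<subseteq> rel_interior P"
      using rel_interior_closure_convex_segment[OF cvx assms(2)] assms(3) closure_subset by blast
    ultimately show False using d(2) by (auto simp: rel_frontier_def)
  qed
  moreover obtain F where "F face_of P" "F \<noteq> P" "c + d *\<^sub>R l \<in> F"
    using d(2) rel_frontier_of_polyhedron_alt[OF polytope_imp_polyhedron[OF assms(1)]] by blast
  ultimately show ?thesis using that by blast
qed

lemma center_shift_mem:
  assumes "convex P" "\<And>z. z \<in> P \<Longrightarrow> 2 *\<^sub>R c - z \<in> P"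
    and "F \<subseteq> P" "\<And>z. z \<in> F \<Longrightarrow> 2 *\<^sub>R c' - z \<in> F"
    and "f \<in> F" "0 \<le> g" "g \<le> 1"
  shows "f + (2 * g) *\<^sub>R (c - c') \<in> P"
proof -
  have "2 *\<^sub>R c - (2 *\<^sub>R c' - f) \<in> P" using assms(2-5) by blast
  then have "f + 2 *\<^sub>R (c - c') \<in> P" by (simp add: algebra_simps)
  then have "(1 - g) *\<^sub>R f + g *\<^sub>R (f + 2 *\<^sub>R (c - c')) \<in> P"
    using convexD[OF assms(1)] assms(3,5-7) by (simp add: subset_iff)
  then show ?thesis by (simp add: algebra_simps)
qed

lemma symmetric_polytope_chord_to_proper_face:
  fixes P :: "'a::euclidean_space set"
  assumes "polytope P" "\<And>z. z \<in> P \<Longrightarrow> 2 *\<^sub>R c - z \<in> P" "x \<in> P" "y \<in> P" "x \<noteq> y"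
  obtains g b F where "0 < g" "g \<le> 1" "F face_of P" "F \<noteq> P" "b \<in> F" "x - y = (2 * g) *\<^sub>R (b - c)"
proof -
  have cvx: "convex P" using assms(1) polytope_imp_convex by blast
  define l where "l = (1/2) *\<^sub>R (x - y)"
  have "c + l = (1/2) *\<^sub>R x + (1/2) *\<^sub>R (2 *\<^sub>R c - y)" by (simp add: l_def algebra_simps)
  also have "\<dots> \<in> P" using convexD[OF cvx assms(3) assms(2)[OF assms(4)]] by simp
  finally have "c + l \<in> P" .
  moreover have "c \<in> rel_interior P" using symmetric_center_in_rel_interior[OF cvx _ assms(2)] assms(3) by blast
  moreover have "l \<noteq> 0" using assms(5) by (simp add: l_def)
  ultimately obtain d F where dF: "1 \<le> d" "F face_of P" "F \<noteq> P" "c + d *\<^sub>R l \<in> F"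
    using polytope_ray_exits_through_proper_face[OF assms(1)] by blast
  show ?thesis
  proof (rule that[of "1/d" F "c + d *\<^sub>R l"])
    show "x - y = (2 * (1/d)) *\<^sub>R (c + d *\<^sub>R l - c)" using dF(1) by (simp add: l_def)
  qed (use dF in auto)
qed

lemma zonotope_extreme_point_shift:
  fixes P :: "'a::euclidean_space set"
  assumes "zonotope P" "x \<in> P" "y \<in> P"
  shows "\<exists>u. u extreme_point_of P \<and> u - (x - y) \<in> P"
  using assms
proof (induction P arbitrary: x y rule: measure_induct_rule[where f = "\<lambda>P. nat (aff_dim P + 1)"])
  case (less P)
  have pol: "polytope P" using less.prems(1) unfolding zonotope_def by blast
  have cvx: "convex P" using pol polytope_imp_convex by blast
  obtain c where c: "\<And>z. z \<in> P \<Longrightarrow> 2 *\<^sub>R c - z \<in> P"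
    using less.prems(1) unfolding zonotope_def centrally_symmetric_def by blast
  show ?case
  proof (cases "x = y")
    case True
    obtain u where "u extreme_point_of P"
      using extreme_point_exists_convex[OF polytope_imp_compact[OF pol] cvx] less.prems(2) by blast
    then show ?thesis using True by (auto simp: extreme_point_of_def)
  next
    case False
    then obtain g b F where gbF: "0 < g" "g \<le> 1" "F face_of P" "F \<noteq> P" "b \<in> F"
      and xy: "x - y = (2 * g) *\<^sub>R (b - c)"
      using symmetric_polytope_chord_to_proper_face[OF pol c less.prems(2,3)] by blast
    have zF: "zonotope F" using zonotope_face[OF less.prems(1) gbF(3)] .
    obtain c' where c': "\<And>z. z \<in> F \<Longrightarrow> 2 *\<^sub>R c' - z \<in> F"
      using zF unfolding zonotope_def centrally_symmetric_def by blast
    \<comment> \<open>\<open>f1 - f2\<close> is the chord of \<open>F\<close> through \<open>b\<close> and \<open>c'\<close>, scaled by the factor \<open>2g\<close> of \<open>x - y\<close>\<close>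
    define f2 where "f2 = 2 *\<^sub>R c' - b"
    define f1 where "f1 = g *\<^sub>R b + (1 - g) *\<^sub>R f2"
    have f2F: "f2 \<in> F" using c' gbF(5) by (simp add: f2_def)
    have f1F: "f1 \<in> F"
      using convexD[OF face_of_imp_convex[OF gbF(3)] gbF(5) f2F, of g "1 - g"] gbF(1,2) by (simp add: f1_def)
    have "aff_dim F < aff_dim P" using face_of_aff_dim_lt[OF cvx gbF(3,4)] .
    then have "nat (aff_dim F + 1) < nat (aff_dim P + 1)" using aff_dim_geq[of F] by linarith
    then obtain u where u: "u extreme_point_of F" "u - (f1 - f2) \<in> F"
      using less.IH zF f1F f2F by blast
    have "f1 - f2 = (2 * g) *\<^sub>R (b - c')"
      by (simp add: f1_def f2_def algebra_simps flip: scaleR_2)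
    then have "u - (x - y) = (u - (f1 - f2)) + (2 * g) *\<^sub>R (c - c')"
      unfolding xy by (simp add: algebra_simps)
    also have "\<dots> \<in> P"
      using center_shift_mem[OF cvx c face_of_imp_subset[OF gbF(3)] c' u(2)] gbF(1,2) by simp
    finally show ?thesis using extreme_point_of_face[OF gbF(3)] u(1) by blast
  qed
qed

lemma homothet_meets_extreme_point_image:
  fixes Z :: "'a::euclidean_space set"
  assumes "zonotope Z" "0 < lam1" "lam1 \<le> lam" "homothet lam1 x1 Z \<inter> homothet lam x Z \<noteq> {}"
  obtains u where "u extreme_point_of Z" "lam1 *\<^sub>R u + x1 \<in> homothet lam x Z"
proof -
  obtain a b where ab: "a \<in> Z" "b \<in> Z" "lam1 *\<^sub>R a + x1 = lam *\<^sub>R b + x"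
    using assms(4) by (auto simp: mem_homothet_iff)
  obtain u where u: "u extreme_point_of Z" "u - (a - b) \<in> Z"
    using zonotope_extreme_point_shift[OF assms(1) ab(1,2)] by blast
  define t where "t = lam1 / lam"
  have t: "0 \<le> t" "t \<le> 1" using assms(2,3) by (auto simp: t_def)
  have "convex Z" using assms(1) polytope_imp_convex unfolding zonotope_def by blast
  then have "t *\<^sub>R (u - (a - b)) + (1 - t) *\<^sub>R b \<in> Z"
    using convexD[OF _ u(2) ab(2)] t by simp
  moreover have "lam1 *\<^sub>R u + x1 = lam *\<^sub>R (t *\<^sub>R (u - (a - b)) + (1 - t) *\<^sub>R b) + x"
    using assms(2,3) ab(3) by (simp add: t_def algebra_simps eq_diff_eq)
  ultimately show ?thesis using that u(1) by (auto simp: mem_homothet_iff)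
qed

lemma compact_homothets_containing_point:
  fixes Z :: "'a::real_normed_vector set"
  assumes "compact Z" "compact L"
  shows "compact {(lam, x). lam \<in> L \<and> p \<in> homothet lam x Z}"
proof -
  have "{(lam, x). lam \<in> L \<and> p \<in> homothet lam x Z} = (\<lambda>q. (fst q, p - fst q *\<^sub>R snd q)) ` (L \<times> Z)"
    by (force simp: mem_homothet_iff)
  moreover have "compact ((\<lambda>q. (fst q, p - fst q *\<^sub>R snd q)) ` (L \<times> Z))"
    by (intro compact_continuous_image compact_Times assms continuous_intros)
  ultimately show ?thesis by simp
qed

lemma compact_homothets_containing:
  fixes Z :: "'a::euclidean_space set"
  assumes "compact Z" "compact L" "A \<noteq> {}"
  shows "compact {(lam, x). lam \<in> L \<and> A \<subseteq> homothet lam x Z}"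
proof -
  have "{(lam, x). lam \<in> L \<and> A \<subseteq> homothet lam x Z} = (\<Inter>p\<in>A. {(lam, x). lam \<in> L \<and> p \<in> homothet lam x Z})"
    using assms(3) by auto
  then show ?thesis
    using assms(3) compact_homothets_containing_point[OF assms(1,2)] by (auto intro!: compact_Inter)
qed

lemma compact_heavy_homothets:
  fixes Z :: "'a::euclidean_space set"
  assumes "compact Z" "compact L" "finite T" "0 < m"
  shows "compact {(lam, x). lam \<in> L \<and> m \<le> real (card (homothet lam x Z \<inter> T))}"
proof -
  let ?heavy = "{A. A \<subseteq> T \<and> m \<le> real (card A)}"
  have "{(lam, x). lam \<in> L \<and> m \<le> real (card (homothet lam x Z \<inter> T))}
      = (\<Union>A\<in>?heavy. {(lam, x). lam \<in> L \<and> A \<subseteq> homothet lam x Z})"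
  proof (intro set_eqI iffI)
    fix q assume "q \<in> (\<Union>A\<in>?heavy. {(lam, x). lam \<in> L \<and> A \<subseteq> homothet lam x Z})"
    then obtain A where "A \<subseteq> T" "m \<le> real (card A)" "fst q \<in> L" "A \<subseteq> homothet (fst q) (snd q) Z"
      by auto
    moreover have "card A \<le> card (homothet (fst q) (snd q) Z \<inter> T)"
      using calculation assms(3) by (intro card_mono) auto
    ultimately show "q \<in> {(lam, x). lam \<in> L \<and> m \<le> real (card (homothet lam x Z \<inter> T))}"
      by (auto simp: case_prod_beta)
  qed auto
  moreover have "finite ?heavy" using assms(3) by simp
  moreover have "A \<noteq> {}" if "A \<in> ?heavy" for A using that assms(4) by auto
  ultimately show ?thesis
    using compact_homothets_containing[OF assms(1,2)] by (auto intro!: compact_UN)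
qed

lemma minimal_heavy_homothet:
  fixes Z :: "'a::euclidean_space set"
  assumes "compact Z" "finite T" "1 < m"
    and "0 < lam0" "m \<le> real (card (homothet lam0 x0 Z \<inter> T))"
  obtains lam1 x1 where "0 < lam1" "m \<le> real (card (homothet lam1 x1 Z \<inter> T))"
    "\<And>lam x. 0 < lam \<Longrightarrow> m \<le> real (card (homothet lam x Z \<inter> T)) \<Longrightarrow> lam1 \<le> lam"
proof -
  define C where "C = {(lam, x). lam \<in> {0..lam0} \<and> m \<le> real (card (homothet lam x Z \<inter> T))}"
  have "compact C"
    unfolding C_def by (rule compact_heavy_homothets) (use assms(1-3) in auto)
  moreover have "(lam0, x0) \<in> C" using assms(4,5) by (simp add: C_def)
  ultimately obtain q where q: "q \<in> C" "\<And>q'. q' \<in> C \<Longrightarrow> fst q \<le> fst q'"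
    using continuous_attains_inf[of C fst] continuous_on_fst[OF continuous_on_id] by blast
  have "fst q \<noteq> 0"
  proof
    assume "fst q = 0"
    then have "homothet (fst q) (snd q) Z \<inter> T \<subseteq> {snd q}" by (auto simp: homothet_def)
    then have "card (homothet (fst q) (snd q) Z \<inter> T) \<le> 1" using card_mono[of "{snd q}"] by simp
    then show False using q(1) assms(3) by (auto simp: C_def)
  qed
  then have "0 < fst q" using q(1) by (auto simp: C_def)
  moreover have "m \<le> real (card (homothet (fst q) (snd q) Z \<inter> T))" using q(1) by (auto simp: C_def)
  moreover have "fst q \<le> lam" if "0 < lam" "m \<le> real (card (homothet lam x Z \<inter> T))" for lam x
  proof (cases "lam \<le> lam0")
    case True
    then show ?thesis using q(2)[of "(lam, x)"] that by (simp add: C_def)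
  next
    case False
    then show ?thesis using q(2)[OF \<open>(lam0, x0) \<in> C\<close>] by simp
  qed
  ultimately show ?thesis using that by blast
qed

definition pierces_heavy_homothets :: "'a::real_vector set \<Rightarrow> 'a set \<Rightarrow> 'a set \<Rightarrow> real \<Rightarrow> bool" where
  "pierces_heavy_homothets W Z T m \<longleftrightarrow> (\<forall>Z'\<in>homothets Z. m \<le> real (card (Z' \<inter> T)) \<longrightarrow> W \<inter> Z' \<noteq> {})"

lemma pierces_heavy_homothets_add_minimal:
  fixes Z :: "'a::euclidean_space set"
  assumes "zonotope Z" "0 < lam1"
    and "\<And>lam x. 0 < lam \<Longrightarrow> m \<le> real (card (homothet lam x Z \<inter> T)) \<Longrightarrow> lam1 \<le> lam"
    and "pierces_heavy_homothets W Z (T - homothet lam1 x1 Z) m"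
  shows "pierces_heavy_homothets (W \<union> homothet lam1 x1 {p. p extreme_point_of Z}) Z T m"
  unfolding pierces_heavy_homothets_def
proof (intro ballI impI)
  fix Z' assume "Z' \<in> homothets Z" and heavy: "m \<le> real (card (Z' \<inter> T))"
  then obtain lam x where Z': "0 < lam" "Z' = homothet lam x Z" by (auto simp: homothets_iff)
  show "(W \<union> homothet lam1 x1 {p. p extreme_point_of Z}) \<inter> Z' \<noteq> {}"
  proof (cases "homothet lam1 x1 Z \<inter> Z' = {}")
    case True
    then have "Z' \<inter> (T - homothet lam1 x1 Z) = Z' \<inter> T" by blast
    then show ?thesis
      using assms(4) \<open>Z' \<in> homothets Z\<close> heavy unfolding pierces_heavy_homothets_def by auto
  next
    case False
    moreover have "lam1 \<le> lam" using assms(3) Z' heavy by blast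
    ultimately obtain u where "u extreme_point_of Z" "lam1 *\<^sub>R u + x1 \<in> Z'"
      using homothet_meets_extreme_point_image[OF assms(1,2)] Z'(2) by metis
    then have "lam1 *\<^sub>R u + x1 \<in> homothet lam1 x1 {p. p extreme_point_of Z} \<inter> Z'"
      by (auto simp: mem_homothet_iff)
    then show ?thesis by blast
  qed
qed

lemma pierces_heavy_homothets_exists_gt_one:
  fixes Z :: "'a::euclidean_space set"
  assumes "zonotope Z" "finite T" "1 < m"
  shows "\<exists>W. finite W \<and> real (card W) \<le> real (card {p. p extreme_point_of Z}) * real (card T) / m
           \<and> pierces_heavy_homothets W Z T m"
  using assms(2)
proof (induction T rule: finite_psubset_induct)
  case (psubset T)
  define E where "E = {p. p extreme_point_of Z}"
  have "finite E" using assms(1) finite_extreme_points_polytope unfolding E_def zonotope_def by blast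
  show ?case
  proof (cases "\<exists>lam x. 0 < lam \<and> m \<le> real (card (homothet lam x Z \<inter> T))")
    case False
    then have "pierces_heavy_homothets {} Z T m"
      by (auto simp: pierces_heavy_homothets_def homothets_iff)
    then show ?thesis using assms(3) by (intro exI[of _ "{}"]) auto
  next
    case True
    then obtain lam1 x1 where min: "0 < lam1" "m \<le> real (card (homothet lam1 x1 Z \<inter> T))"
      "\<And>lam x. 0 < lam \<Longrightarrow> m \<le> real (card (homothet lam x Z \<inter> T)) \<Longrightarrow> lam1 \<le> lam"
      using minimal_heavy_homothet[OF _ psubset.hyps assms(3)] assms(1)
      by (metis polytope_imp_compact zonotope_def)
    define Z1 where "Z1 = homothet lam1 x1 Z"
    have card_rest: "real (card (T - Z1)) + m \<le> real (card T)"
      using min(2) card_Int_Diff[OF psubset.hyps, of Z1] by (simp add: Z1_def Int_commute)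
    then have "T - Z1 \<subset> T" using assms(3) by auto
    then obtain W where W: "finite W" "real (card W) \<le> real (card E) * real (card (T - Z1)) / m"
      "pierces_heavy_homothets W Z (T - Z1) m"
      using psubset.IH unfolding E_def by blast
    have "card (W \<union> homothet lam1 x1 E) \<le> card W + card E"
      using card_Un_le[of W] card_image_le[OF \<open>finite E\<close>] unfolding homothet_def
      by (meson add_left_mono order_trans)
    then have "real (card (W \<union> homothet lam1 x1 E)) \<le> real (card W) + real (card E)"
      by linarith
    also have "\<dots> \<le> real (card E) * (real (card (T - Z1)) + m) / m"
      using W(2) assms(3) by (simp add: field_simps)
    also have "\<dots> \<le> real (card E) * real (card T) / m"
      using card_rest assms(3) by (intro divide_right_mono mult_left_mono) auto
    finally have "real (card (W \<union> homothet lam1 x1 E)) \<le> real (card E) * real (card T) / m" .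
    moreover have "pierces_heavy_homothets (W \<union> homothet lam1 x1 E) Z T m"
      using pierces_heavy_homothets_add_minimal[of Z lam1 m T W x1] assms(1) min(1,3) W(3)
      unfolding E_def Z1_def by blast
    moreover have "finite (W \<union> homothet lam1 x1 E)"
      using W(1) \<open>finite E\<close> by (simp add: homothet_def)
    ultimately show ?thesis unfolding E_def by blast
  qed
qed

lemma pierces_heavy_homothets_exists:
  fixes Z :: "'a::euclidean_space set"
  assumes "zonotope Z" "finite T" "0 < m"
  shows "\<exists>W. finite W \<and> real (card W) \<le> real (card {p. p extreme_point_of Z}) * real (card T) / m
           \<and> pierces_heavy_homothets W Z T m"
proof (cases "1 < m")
  case True
  then show ?thesis using pierces_heavy_homothets_exists_gt_one assms(1,2) by blast
next
  case m_le_1: False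
  show ?thesis
  proof (cases "Z = {}")
    case True
    then have "pierces_heavy_homothets {} Z T m"
      using assms(3) by (auto simp: pierces_heavy_homothets_def homothets_iff homothet_def)
    then show ?thesis using assms(3) by (intro exI[of _ "{}"]) simp
  next
    case False
    have pol: "polytope Z" using assms(1) unfolding zonotope_def by blast
    then obtain u where "u extreme_point_of Z"
      using extreme_point_exists_convex polytope_imp_compact polytope_imp_convex False by blast
    then have "1 \<le> card {p. p extreme_point_of Z}"
      using finite_extreme_points_polytope[OF pol] by (metis One_nat_def Suc_leI card_gt_0_iff empty_iff mem_Collect_eq)
    then have "m * real (card T) \<le> real (card {p. p extreme_point_of Z}) * real (card T)"
      using m_le_1 by (intro mult_right_mono) auto
    then have "real (card T) \<le> real (card {p. p extreme_point_of Z}) * real (card T) / m"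
      using assms(3) by (simp add: field_simps)
    moreover have "pierces_heavy_homothets T Z T m"
      unfolding pierces_heavy_homothets_def
    proof (intro ballI impI notI)
      fix Z' assume "m \<le> real (card (Z' \<inter> T))" "T \<inter> Z' = {}"
      then show False using assms(3) by (simp add: Int_commute)
    qed
    ultimately show ?thesis using assms(2) by blast
  qed
qed

theorem mainTheorem20:
  fixes Z :: "'a::euclidean_space set" and S :: "'a set" and \<epsilon> :: real
  assumes "zonotope Z"
    and "finite S" and "S \<noteq> {}"
    and "\<epsilon> > 0"
  shows "\<exists>W. finite W \<and> real (card W) \<le> real (card {p. p extreme_point_of Z}) / \<epsilon> \<and>
           (\<forall>Z'\<in>homothets Z. real (card (Z' \<inter> S)) \<ge> \<epsilon> * real (card S) \<longrightarrow> W \<inter> Z' \<noteq> {})"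
proof -
  have "0 < real (card S)" using assms(2,3) by (simp add: card_gt_0_iff)
  then obtain W where "finite W"
    "real (card W) \<le> real (card {p. p extreme_point_of Z}) * real (card S) / (\<epsilon> * real (card S))"
    "pierces_heavy_homothets W Z S (\<epsilon> * real (card S))"
    using pierces_heavy_homothets_exists[OF assms(1,2)] assms(4) by (metis mult_pos_pos)
  then show ?thesis
    using \<open>0 < real (card S)\<close> by (auto simp: pierces_heavy_homothets_def)
qed

end
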